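(* Consider any sequence of a total of $R$ operations, each of which is either an execution of the procedure $\textsc{Insert\_Rule}(r)$ or of the procedure $\textsc{Remove\_Rule}(r)$ (both described in the context), starting from the initial state. The worst-case time complexity of performing all of these operations is $O(RK\log M)$, where $K$ is the number of atoms and $M$ is the maximum number of overlapping rules per network switch (i.e. the maximum, over nodes $s$ and atoms $\alpha$, of the number of rules $r$ with $\mathrm{source}(r)=s$ whose interval contains $\alpha$).
   Context: Fix a positive integer $k$ and let $\mathsf{MIN}=0$, $\mathsf{MAX}=2^k$. A (forwarding) rule $r$ has: a half-closed interval $[\mathrm{lo}(r):\mathrm{hi}(r))$ of integers with $\mathsf{MIN}\le \mathrm{lo}(r)<\mathrm{hi}(r)\le\mathsf{MAX}$ (the interval corresponding to an IP prefix); a priority $\mathrm{priority}(r)$; and a directed edge $\mathrm{link}(r)$ of a fixed graph (the network topology), whose tail node is denoted $\mathrm{source}(r)$. Rules with the same source whose intervals overlap have pairwise distinct priorities. Atom representation: an ordered map $\mathfrak{M}$ (a balanced binary search tree with logarithmic-time insertion and lookup) from integers to atom identifiers, initialized to $\{\mathsf{MIN}\mapsto\alpha_0,\ \mathsf{MAX}\mapsto\alpha_\infty\}$; new identifiers are drawn from a counter increasing consecutively from $0$. For each key $n<\mathsf{MAX}$ with $n\mapsto\alpha$ in $\mathfrak{M}$, the atom $\alpha$ denotes the interval $[n:n')$ where $n'$ is the next larger key. For a rule $r$, $[\![r]\!]$ denotes the set of atoms whose intervals are contained in $[\mathrm{lo}(r):\mathrm{hi}(r))$. The procedure $\textsc{Create\_Atoms}^+(r)$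 inserts $\mathrm{lo}(r)$ and $\mathrm{hi}(r)$ into $\mathfrak{M}$ (each only if not already a key) with fresh identifiers, and returns the set $\Delta$ (of size at most 2) of delta-pairs $\alpha\mapsto\alpha'$, meaning that the interval previously denoted by the existing atom $\alpha$ is now split into $\alpha$ (lower part) and the new atom $\alpha'$ (upper part). Global state: $\mathit{label}[\ell]$, a set of atoms for each link $\ell$ (initially empty); $\mathit{owner}$, an array indexed by atoms where $\mathit{owner}[\alpha]$ is a hash table mapping a node $s$ to a balanced binary search tree $\mathit{owner}[\alpha][s]$ of the rules $r$ with $\mathrm{source}(r)=s$ and $\alpha\in[\![r]\!]$, ordered by priority (supporting insertion, removal, emptiness test and retrieval of the highest-priority rule). $\textsc{Insert\_Rule}(r)$: (1) $\Delta\gets\textsc{Create\_Atoms}^+(r)$; for each $\alpha\mapsto\alpha'$ in $\Delta$: set $\mathit{owner}[\alpha']\gets$ a copy of $\mathit{owner}[\alpha]$, and for each entry $s\mapsto \mathit{bst}$ in $\mathit{owner}[\alpha]$, let $r'$ be the highest-priority rule of $\mathit{bst}$ and add $\alpha'$ to $\mathit{label}[\mathrm{link}(r')]$. (2) For each $\alpha\in[\![r]\!]$: let $\mathit{bst}=\mathit{owner}[\alpha][\mathrm{source}(r)]$ and $r'$ its highest-priority rule (or none if empty); if there is no $r'$ or $\mathrm{priority}(r')<\mathrm{priority}(r)$, add $\alpha$ to $\mathit{label}[\mathrm{link}(r)]$ and, if $r'$ exists and $\mathrm{link}(r')\ne\mathrm{link}(r)$, remove $\alpha$ from $\mathit{label}[\mathrm{link}(r')]$;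 finally insert $r$ into $\mathit{bst}$. $\textsc{Remove\_Rule}(r)$: for each $\alpha\in[\![r]\!]$: let $\mathit{bst}=\mathit{owner}[\alpha][\mathrm{source}(r)]$, $r'$ its highest-priority rule; remove $r$ from $\mathit{bst}$; if $r'=r$, remove $\alpha$ from $\mathit{label}[\mathrm{link}(r)]$, and if $\mathit{bst}$ is now nonempty, add $\alpha$ to $\mathit{label}[\mathrm{link}(r'')]$ where $r''$ is the new highest-priority rule of $\mathit{bst}$. *)

theory Defs
  imports Complex_Main
begin

text \<open>A rule: half-closed interval [lo, hi), a priority and a link (a directed
edge, represented as a pair of nodes (tail, head)).\<close>

record 'v rule =
  lo :: nat
  hi :: nat
  prio :: int
  rlink :: "'v \<times> 'v"

definition source :: "'v rule \<Rightarrow> 'v" where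
  "source r = fst (rlink r)"

text \<open>Global state. amap is the ordered map from integers to atom identifiers,
cnt the identifier counter, label and owner as in the paper (owner alpha s is the
set of rules stored in the priority-ordered BST owner[alpha][s]; an absent hash
entry is represented by the empty set).  live is a ghost component recording the
set of currently installed rules (used only to state validity and M).\<close>

record 'v st =
  amap :: "nat \<rightharpoonup> nat"
  cnt :: nat
  label :: "'v \<times> 'v \<Rightarrow> nat set"
  owner :: "nat \<Rightarrow> 'v \<Rightarrow> 'v rule set"
  live :: "'v rule set"

text \<open>Initial state for MIN = 0, MAX = 2^k: alpha_0 = 0, alpha_infinity = 1.\<close>

definition init :: "nat \<Rightarrow> 'v st" where
  "init k = \<lparr> amap = [0 \<mapsto> 0, 2 ^ k \<mapsto> 1], cnt = 2, label = (\<lambda>_. {}),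
              owner = (\<lambda>_ _. {}), live = {} \<rparr>"

definition next_key :: "'v st \<Rightarrow> nat \<Rightarrow> nat" where
  "next_key s n = Min {m \<in> dom (amap s). n < m}"

definition pred_key :: "'v st \<Rightarrow> nat \<Rightarrow> nat" where
  "pred_key s n = Max {m \<in> dom (amap s). m < n}"

definition atom_keys :: "nat \<Rightarrow> 'v st \<Rightarrow> 'v rule \<Rightarrow> nat set" where
  "atom_keys k s r = {n \<in> dom (amap s). n < 2 ^ k \<and> lo r \<le> n \<and> next_key s n \<le> hi r}"

definition atom_list :: "nat \<Rightarrow> 'v st \<Rightarrow> 'v rule \<Rightarrow> nat list" where
  "atom_list k s r = map (\<lambda>n. the (amap s n)) (sorted_list_of_set (atom_keys k s r))"

definition atoms_of :: "nat \<Rightarrow> 'v st \<Rightarrow> 'v rule \<Rightarrow> nat set" where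
  "atoms_of k s r = (\<lambda>n. the (amap s n)) ` atom_keys k s r"

text \<open>One lookup / insertion / predecessor query in the balanced BST amap.\<close>
definition mapc :: "'v st \<Rightarrow> real" where
  "mapc s = 1 + log 2 (real (card (dom (amap s))))"

text \<open>One insertion / removal / max-retrieval in a balanced BST holding the set B.\<close>
definition bstc :: "'v rule set \<Rightarrow> real" where
  "bstc B = 1 + log 2 (real (card B) + 1)"

definition top :: "'v rule set \<Rightarrow> 'v rule" where
  "top B = (SOME r. r \<in> B \<and> (\<forall>r'\<in>B. prio r' \<le> prio r))"

definition entries :: "('v \<Rightarrow> 'v rule set) \<Rightarrow> 'v set" where
  "entries T = {s. T s \<noteq> {}}"

primrec run_steps :: "('a \<Rightarrow> 's \<Rightarrow> 's \<times> real) \<Rightarrow> 'a list \<Rightarrow> 's \<Rightarrow> 's \<times> real" where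
  "run_steps f [] s = (s, 0)"
| "run_steps f (x # xs) s =
     (let (s1, c1) = f x s; (s2, c2) = run_steps f xs s1 in (s2, c1 + c2))"

text \<open>Insert key n (if absent): lookup, predecessor query, insertion.\<close>
definition insert_key :: "'v st \<Rightarrow> nat \<Rightarrow> 'v st \<times> (nat \<times> nat) list \<times> real" where
  "insert_key s n =
     (if n \<in> dom (amap s) then (s, [], mapc s)
      else (let a = the (amap s (pred_key s n)); a' = cnt s in
             (s\<lparr> amap := (amap s)(n \<mapsto> a'), cnt := a' + 1 \<rparr>, [(a, a')], 3 * mapc s)))"

definition create_atoms :: "'v rule \<Rightarrow> 'v st \<Rightarrow> 'v st \<times> (nat \<times> nat) list \<times> real" where
  "create_atoms r s =
     (let (s1, d1, c1) = insert_key s (lo r); (s2, d2, c2) = insert_key s1 (hi r)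
      in (s2, d1 @ d2, c1 + c2))"

text \<open>Processing one delta pair: deep copy of the hash table owner[alpha]
(cost linear in its total size), and for each entry a max-retrieval and a label
insertion.\<close>
definition apply_delta :: "nat \<times> nat \<Rightarrow> 'v st \<Rightarrow> 'v st \<times> real" where
  "apply_delta d s =
     (let (a, a') = d; T = owner s a;
          lab = (\<lambda>l. if (\<exists>x \<in> entries T. rlink (top (T x)) = l)
                       then label s l \<union> {a'} else label s l);
          c = 1 + (\<Sum>x \<in> entries T. 1 + real (card (T x)) + bstc (T x) + 1)
      in (s\<lparr> owner := (owner s)(a' := T), label := lab \<rparr>, c))"

definition ins_atom :: "'v rule \<Rightarrow> nat \<Rightarrow> 'v st \<Rightarrow> 'v st \<times> real" where
  "ins_atom r a s =
     (let x = source r; B = owner s a x;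
          c = 1 + bstc B + 2 + bstc B;
          lab = (if B = {} \<or> prio (top B) < prio r then
                   (let L1 = (label s)(rlink r := label s (rlink r) \<union> {a}) in
                    if B \<noteq> {} \<and> rlink (top B) \<noteq> rlink r
                    then L1(rlink (top B) := L1 (rlink (top B)) - {a}) else L1)
                 else label s)
      in (s\<lparr> label := lab, owner := (owner s)(a := (owner s a)(x := B \<union> {r})) \<rparr>, c))"

text \<open>Enumerating [[r]] via a range query in amap.\<close>
definition enumc :: "nat \<Rightarrow> 'v st \<Rightarrow> 'v rule \<Rightarrow> real" where
  "enumc k s r = mapc s + real (length (atom_list k s r))"

definition insert_rule :: "nat \<Rightarrow> 'v rule \<Rightarrow> 'v st \<Rightarrow> 'v st \<times> real" where
  "insert_rule k r s =
     (let (s1, D, c1) = create_atoms r s;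
          (s2, c2) = run_steps apply_delta D s1;
          (s3, c3) = run_steps (ins_atom r) (atom_list k s2 r) s2
      in (s3\<lparr> live := live s3 \<union> {r} \<rparr>, c1 + c2 + enumc k s2 r + c3))"

definition rem_atom :: "'v rule \<Rightarrow> nat \<Rightarrow> 'v st \<Rightarrow> 'v st \<times> real" where
  "rem_atom r a s =
     (let x = source r; B = owner s a x; r' = top B; B' = B - {r};
          c = 1 + bstc B + bstc B + 2 + bstc B';
          lab = (if r' = r then
                   (let L1 = (label s)(rlink r := label s (rlink r) - {a}) in
                    if B' \<noteq> {} then L1(rlink (top B') := L1 (rlink (top B')) \<union> {a}) else L1)
                 else label s)
      in (s\<lparr> label := lab, owner := (owner s)(a := (owner s a)(x := B')) \<rparr>, c))"

definition remove_rule :: "nat \<Rightarrow> 'v rule \<Rightarrow> 'v st \<Rightarrow> 'v st \<times> real" where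
  "remove_rule k r s =
     (let (s1, c1) = run_steps (rem_atom r) (atom_list k s r) s
      in (s1\<lparr> live := live s1 - {r} \<rparr>, enumc k s r + c1))"

datatype 'v oper = Ins "'v rule" | Rem "'v rule"

definition exec_op :: "nat \<Rightarrow> 'v oper \<Rightarrow> 'v st \<Rightarrow> 'v st \<times> real" where
  "exec_op k p s = (case p of Ins r \<Rightarrow> insert_rule k r s | Rem r \<Rightarrow> remove_rule k r s)"

definition valid_op :: "nat \<Rightarrow> ('v \<times> 'v) set \<Rightarrow> 'v st \<Rightarrow> 'v oper \<Rightarrow> bool" where
  "valid_op k E s p = (case p of
      Ins r \<Rightarrow> lo r < hi r \<and> hi r \<le> 2 ^ k \<and> rlink r \<in> E \<and> r \<notin> live s \<and>
               (\<forall>r' \<in> live s. source r' = source r \<and> lo r' < hi r \<and> lo r < hi r'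
                     \<longrightarrow> prio r' \<noteq> prio r)
    | Rem r \<Rightarrow> r \<in> live s)"

primrec valid_seq :: "nat \<Rightarrow> ('v \<times> 'v) set \<Rightarrow> 'v oper list \<Rightarrow> 'v st \<Rightarrow> bool" where
  "valid_seq k E [] s = True"
| "valid_seq k E (p # os) s = (valid_op k E s p \<and> valid_seq k E os (fst (exec_op k p s)))"

primrec states :: "nat \<Rightarrow> 'v oper list \<Rightarrow> 'v st \<Rightarrow> 'v st list" where
  "states k [] s = [s]"
| "states k (p # os) s = s # states k os (fst (exec_op k p s))"

definition total_cost :: "nat \<Rightarrow> 'v oper list \<Rightarrow> real" where
  "total_cost k os = snd (run_steps (exec_op k) os (init k))"

definition final_state :: "nat \<Rightarrow> 'v oper list \<Rightarrow> 'v st" where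
  "final_state k os = fst (run_steps (exec_op k) os (init k))"

definition num_atoms :: "nat \<Rightarrow> 'v st \<Rightarrow> nat" where
  "num_atoms k s = card {n \<in> dom (amap s). n < 2 ^ k}"

definition overlap :: "nat \<Rightarrow> 'v st \<Rightarrow> nat" where
  "overlap k s = Max {card {r \<in> live s. source r = x \<and> a \<in> atoms_of k s r} | x a. True}"

definition max_overlap :: "nat \<Rightarrow> 'v oper list \<Rightarrow> nat" where
  "max_overlap k os = Max (overlap k ` set (states k os (init k)))"

end

theory Submission
  imports Defs
begin

text \<open>Each operation visits every atom of its rule once, paying for one update of an owner
  tree of logarithmic cost, plus atom-map queries of cost O(K). The owner tree of an atom and
  a switch only ever holds rules of that switch whose interval contains the atom, so it has at
  most M elements and each visit costs O(log M). The only expensive step is splitting an atom,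
  which copies an owner table at cost O(N log M) for the N \<le> R installed rules; but atoms are
  never merged, so at most K splits happen in the whole run and together they cost
  O(K R log M). Summing over the R operations gives O(R K log M).\<close>

abbreviation lg :: "nat \<Rightarrow> real" where
  "lg M \<equiv> 1 + log 2 (real M)"

lemma run_steps_Cons_eq:
  "run_steps f (x # xs) s =
     (fst (run_steps f xs (fst (f x s))), snd (f x s) + snd (run_steps f xs (fst (f x s))))"
  by (simp split: prod.splits)

lemma run_steps_append:
  "run_steps f (xs @ ys) s =
     (fst (run_steps f ys (fst (run_steps f xs s))),
      snd (run_steps f xs s) + snd (run_steps f ys (fst (run_steps f xs s))))"
  by (induction xs arbitrary: s) (simp_all add: run_steps_Cons_eq del: run_steps.simps(2))

lemma run_steps_amortized:
  fixes \<Phi> :: "'s \<Rightarrow> real"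
  assumes step: "\<And>x xs s. I (x # xs) s \<Longrightarrow>
      I xs (fst (f x s)) \<and> snd (f x s) \<le> P + \<Phi> (fst (f x s)) - \<Phi> s"
    and "I xs s"
  shows "snd (run_steps f xs s) \<le> real (length xs) * P + \<Phi> (fst (run_steps f xs s)) - \<Phi> s"
  using assms(2)
proof (induction xs arbitrary: s)
  case Nil
  then show ?case by simp
next
  case (Cons x xs)
  from step[OF Cons.prems] Cons.IH[of "fst (f x s)"] show ?case
    by (simp add: run_steps_Cons_eq algebra_simps del: run_steps.simps(2))
qed

lemma run_steps_owner_update:
  fixes g :: "nat \<Rightarrow> 'v st \<Rightarrow> 'v st \<times> real"
  assumes step: "\<And>a t. amap (fst (g a t)) = amap t \<and> cnt (fst (g a t)) = cnt t
      \<and> live (fst (g a t)) = live t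
      \<and> owner (fst (g a t)) = (owner t)(a := (owner t a)(x := F (owner t a x)))
      \<and> snd (g a t) = cost (owner t a x)"
    and "distinct as"
  shows "amap (fst (run_steps g as t)) = amap t \<and> cnt (fst (run_steps g as t)) = cnt t
      \<and> live (fst (run_steps g as t)) = live t
      \<and> owner (fst (run_steps g as t)) =
          (\<lambda>a y. if a \<in> set as \<and> y = x then F (owner t a y) else owner t a y)
      \<and> snd (run_steps g as t) = (\<Sum>a\<in>set as. cost (owner t a x))"
  using assms(2)
proof (induction as arbitrary: t)
  case Nil
  then show ?case by simp
next
  case (Cons a as)
  let ?t = "fst (g a t)"
  have "a \<notin> set as" "distinct as" using Cons.prems by auto
  moreover have "(\<Sum>b\<in>set as. cost (owner ?t b x)) = (\<Sum>b\<in>set as. cost (owner t b x))"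
    using step[of a t] \<open>a \<notin> set as\<close> by (intro sum.cong) auto
  ultimately show ?case using Cons.IH[of ?t] step[of a t]
    by (auto simp: run_steps_Cons_eq fun_eq_iff simp del: run_steps.simps(2))
qed

definition key_succ :: "(nat \<rightharpoonup> nat) \<Rightarrow> nat \<Rightarrow> nat" where
  "key_succ m n = Min {q \<in> dom m. n < q}"

definition covers :: "(nat \<rightharpoonup> nat) \<Rightarrow> 'v rule \<Rightarrow> nat \<Rightarrow> bool" where
  "covers m r n \<longleftrightarrow> lo r \<le> n \<and> key_succ m n \<le> hi r"

lemma atom_keys_covers:
  "atom_keys k s r = {n \<in> dom (amap s). n < 2 ^ k \<and> covers (amap s) r n}"
  unfolding atom_keys_def covers_def key_succ_def next_key_def by simp

lemma key_succ_mem: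
  assumes "finite (dom m)" "q \<in> dom m" "n < q"
  shows "key_succ m n \<in> dom m" "n < key_succ m n"
proof -
  have "key_succ m n \<in> {q \<in> dom m. n < q}"
    unfolding key_succ_def by (rule Min_in) (use assms in auto)
  then show "key_succ m n \<in> dom m" "n < key_succ m n" by auto
qed

lemma key_succ_le: "finite (dom m) \<Longrightarrow> q \<in> dom m \<Longrightarrow> n < q \<Longrightarrow> key_succ m n \<le> q"
  unfolding key_succ_def by (rule Min_le) auto

lemma key_succ_antimono:
  assumes "finite (dom m')" "dom m \<subseteq> dom m'" "q \<in> dom m" "n < q"
  shows "key_succ m' n \<le> key_succ m n"
proof -
  have "finite (dom m)" using assms(1,2) by (rule finite_subset[rotated])
  with assms show ?thesis using key_succ_mem[of m q n] key_succ_le[of m' "key_succ m n" n] by auto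
qed

lemma covers_refine:
  "finite (dom m') \<Longrightarrow> dom m \<subseteq> dom m' \<Longrightarrow> q \<in> dom m \<Longrightarrow> n < q \<Longrightarrow> covers m r n \<Longrightarrow> covers m' r n"
  unfolding covers_def using key_succ_antimono[of m' m q n] by auto

definition wf_atom_map :: "nat \<Rightarrow> (nat \<rightharpoonup> nat) \<Rightarrow> nat \<Rightarrow> bool" where
  "wf_atom_map k m c \<longleftrightarrow> dom m \<subseteq> {..2 ^ k} \<and> 0 \<in> dom m \<and> 2 ^ k \<in> dom m
     \<and> (\<forall>n\<in>dom m. the (m n) < c) \<and> inj_on (\<lambda>n. the (m n)) (dom m)"

definition owners_sound ::
    "nat \<Rightarrow> (nat \<rightharpoonup> nat) \<Rightarrow> (nat \<Rightarrow> 'v \<Rightarrow> 'v rule set) \<Rightarrow> 'v rule set \<Rightarrow> bool" where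
  "owners_sound k m Ow L \<longleftrightarrow>
     (\<forall>n\<in>dom m. n < 2 ^ k \<longrightarrow> (\<forall>x. Ow (the (m n)) x \<subseteq> {r \<in> L. source r = x \<and> covers m r n}))"

lemma wf_atom_map_finite: "wf_atom_map k m c \<Longrightarrow> finite (dom m)"
  unfolding wf_atom_map_def using finite_subset by blast

lemma pred_key_facts:
  assumes W: "wf_atom_map k m c" and n: "n \<le> 2 ^ k" "n \<notin> dom m"
  defines "p \<equiv> Max {q \<in> dom m. q < n}"
  shows "p \<in> dom m" "p < n" "n < 2 ^ k" "n < key_succ m p"
proof -
  have fin: "finite (dom m)" using W by (rule wf_atom_map_finite)
  have ends: "0 \<in> dom m" "2 ^ k \<in> dom m" using W unfolding wf_atom_map_def by auto
  then show "n < 2 ^ k" using n by (cases "n = 2 ^ k") auto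
  have ne: "{q \<in> dom m. q < n} \<noteq> {}" using ends n by (cases n) auto
  have "p \<in> {q \<in> dom m. q < n}" unfolding p_def by (rule Max_in) (use fin ne in auto)
  then show p: "p \<in> dom m" "p < n" by auto
  have "key_succ m p \<in> dom m" "p < key_succ m p"
    using key_succ_mem[OF fin ends(2)] p \<open>n < 2 ^ k\<close> by auto
  moreover have "q \<le> p" if "q \<in> dom m" "q < n" for q
    unfolding p_def by (rule Max_ge) (use fin that in auto)
  ultimately show "n < key_succ m p" using n(2) by (metis leD linorder_neqE_nat)
qed

lemma wf_atom_map_insert:
  assumes "wf_atom_map k m c" "n \<le> 2 ^ k" "n \<notin> dom m"
  shows "wf_atom_map k (m(n \<mapsto> c)) (c + 1)"
  using assms unfolding wf_atom_map_def inj_on_def by (auto simp: less_Suc_eq split: if_splits)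

text \<open>The new atom c inherits the owners of the atom it is split from; this stays sound
  because it is a sub-interval of that atom.\<close>

lemma owners_sound_split:
  assumes W: "wf_atom_map k m c" and n: "n \<le> 2 ^ k" "n \<notin> dom m"
    and I: "owners_sound k m Ow L"
  defines "p \<equiv> Max {q \<in> dom m. q < n}"
  shows "owners_sound k (m(n \<mapsto> c)) (Ow(c := Ow (the (m p)))) L"
  unfolding owners_sound_def
proof (intro ballI impI allI)
  let ?m = "m(n \<mapsto> c)"
  have fin: "finite (dom ?m)" using wf_atom_map_finite[OF W] by simp
  have top: "2 ^ k \<in> dom m" and ids: "\<forall>q\<in>dom m. the (m q) < c"
    using W unfolding wf_atom_map_def by auto
  note P = pred_key_facts[OF W n, folded p_def]
  fix q x assume q: "q \<in> dom ?m" "q < 2 ^ k"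
  show "(Ow(c := Ow (the (m p)))) (the (?m q)) x \<subseteq> {r \<in> L. source r = x \<and> covers ?m r q}"
  proof (cases "q = n")
    case True
    have "key_succ ?m n \<le> key_succ m p"
      using key_succ_le[OF fin] key_succ_mem[OF wf_atom_map_finite[OF W] top, of p] P by auto
    then have "covers m r p \<Longrightarrow> covers ?m r n" for r :: "'a rule"
      unfolding covers_def using P by auto
    moreover have "Ow (the (m p)) x \<subseteq> {r \<in> L. source r = x \<and> covers m r p}"
      using I P unfolding owners_sound_def by auto
    ultimately show ?thesis using True by auto
  next
    case False
    then have "q \<in> dom m" using q by auto
    then have "(Ow(c := Ow (the (m p)))) (the (?m q)) x = Ow (the (m q)) x"
      using False ids by auto
    moreover have "Ow (the (m q)) x \<subseteq> {r \<in> L. source r = x \<and> covers m r q}"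
      using I \<open>q \<in> dom m\<close> q unfolding owners_sound_def by auto
    moreover have "covers m r q \<Longrightarrow> covers ?m r q" for r :: "'a rule"
      using covers_refine[OF fin _ top q(2)] by auto
    ultimately show ?thesis by auto
  qed
qed

definition copy_owners ::
    "(nat \<times> nat) list \<Rightarrow> (nat \<Rightarrow> 'v \<Rightarrow> 'v rule set) \<Rightarrow> (nat \<Rightarrow> 'v \<Rightarrow> 'v rule set)" where
  "copy_owners D Ow = foldl (\<lambda>O' (a, a'). O'(a' := O' a)) Ow D"

lemma copy_owners_append: "copy_owners (D @ D') Ow = copy_owners D' (copy_owners D Ow)"
  by (simp add: copy_owners_def)

lemma run_steps_apply_delta:
  "amap (fst (run_steps apply_delta D t)) = amap t \<and> cnt (fst (run_steps apply_delta D t)) = cnt t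
   \<and> live (fst (run_steps apply_delta D t)) = live t
   \<and> owner (fst (run_steps apply_delta D t)) = copy_owners D (owner t)"
proof (induction D arbitrary: t)
  case Nil
  then show ?case by (simp add: copy_owners_def)
next
  case (Cons ad D)
  obtain a a' where "ad = (a, a')" by fastforce
  with Cons.IH[of "fst (apply_delta ad t)"] show ?case
    by (simp add: run_steps_Cons_eq copy_owners_def apply_delta_def Let_def fun_upd_def
        del: run_steps.simps(2))
qed

lemma num_atoms_pos: "wf_atom_map k (amap s) c \<Longrightarrow> 1 \<le> num_atoms k s"
proof -
  assume W: "wf_atom_map k (amap s) c"
  then have "0 \<in> {n \<in> dom (amap s). n < 2 ^ k}" unfolding wf_atom_map_def by simp
  moreover have "finite {n \<in> dom (amap s). n < 2 ^ k}" using wf_atom_map_finite[OF W] by simp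
  ultimately show ?thesis unfolding num_atoms_def
    by (metis One_nat_def Suc_leI card_gt_0_iff empty_iff)
qed

lemma card_dom_amap: "wf_atom_map k (amap s) c \<Longrightarrow> card (dom (amap s)) = num_atoms k s + 1"
proof -
  assume W: "wf_atom_map k (amap s) c"
  then have "dom (amap s) = insert (2 ^ k) {n \<in> dom (amap s). n < 2 ^ k}"
    unfolding wf_atom_map_def by force
  then show ?thesis unfolding num_atoms_def using wf_atom_map_finite[OF W]
    by (metis (no_types, lifting) Suc_eq_plus1 card_insert_disjoint finite_subset less_irrefl
        mem_Collect_eq subset_insertI)
qed

lemma num_atoms_mono:
  "finite (dom (amap t)) \<Longrightarrow> dom (amap s) \<subseteq> dom (amap t) \<Longrightarrow> num_atoms k s \<le> num_atoms k t"
  unfolding num_atoms_def by (rule card_mono) auto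

text \<open>Holds for M = 0 because of the junk value log 2 0 = 0.\<close>

lemma log_nat_nonneg: "0 \<le> log 2 (real (M :: nat))"
  by (cases "M = 0") (auto simp: log_def)

lemma log_Suc_le: "log 2 (real (M :: nat) + 1) \<le> real M"
proof -
  have "real M + 1 \<le> 2 ^ M"
    using less_exp[of M] by (metis Suc_eq_plus1 Suc_leI of_nat_Suc of_nat_le_iff of_nat_numeral
        of_nat_power add.commute)
  then have "log 2 (real M + 1) \<le> log 2 (2 ^ M)" by (intro log_mono) auto
  then show ?thesis by (simp add: log_pow_cancel)
qed

lemma mapc_le_num_atoms: "wf_atom_map k (amap s) c \<Longrightarrow> mapc s \<le> 2 * real (num_atoms k s)"
  unfolding mapc_def
  using card_dom_amap[of k s c] log_Suc_le[of "num_atoms k s"] num_atoms_pos[of k s c] by (simp add: add.commute)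

lemma mapc_nonneg: "wf_atom_map k (amap s) c \<Longrightarrow> 0 \<le> mapc s"
  unfolding mapc_def using card_dom_amap[of k s c] by simp

lemma insert_key_facts:
  assumes W: "wf_atom_map k (amap s) (cnt s)" and n: "n \<le> 2 ^ k"
    and ik: "insert_key s n = (s', d, c)"
  shows "wf_atom_map k (amap s') (cnt s')" "owner s' = owner s" "live s' = live s"
    "dom (amap s) \<subseteq> dom (amap s')" "num_atoms k s' = num_atoms k s + length d" "c \<le> 3 * mapc s"
    "owners_sound k (amap s) Ow L \<Longrightarrow> owners_sound k (amap s') (copy_owners d Ow) L"
proof -
  have "wf_atom_map k (amap s') (cnt s') \<and> owner s' = owner s \<and> live s' = live s
    \<and> dom (amap s) \<subseteq> dom (amap s') \<and> num_atoms k s' = num_atoms k s + length d \<and> c \<le> 3 * mapc s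
    \<and> (owners_sound k (amap s) Ow L \<longrightarrow> owners_sound k (amap s') (copy_owners d Ow) L)"
  proof (cases "n \<in> dom (amap s)")
    case True
    then show ?thesis using ik W mapc_nonneg[OF W] by (auto simp: insert_key_def copy_owners_def)
  next
    case False
    let ?m = "amap s"
    define p where "p = Max {q \<in> dom ?m. q < n}"
    have e: "s' = s\<lparr>amap := ?m(n \<mapsto> cnt s), cnt := cnt s + 1\<rparr>" "d = [(the (?m p), cnt s)]"
      "c = 3 * mapc s"
      using ik False by (auto simp: insert_key_def pred_key_def p_def Let_def)
    have "{q \<in> dom (?m(n \<mapsto> cnt s)). q < 2 ^ k} = insert n {q \<in> dom ?m. q < 2 ^ k}"
      using pred_key_facts(3)[OF W n False] by auto
    then have "num_atoms k s' = num_atoms k s + 1"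
      using False wf_atom_map_finite[OF W] e(1) by (simp add: num_atoms_def)
    then show ?thesis
      using e wf_atom_map_insert[OF W n False] owners_sound_split[OF W n False, of Ow L]
      by (auto simp: p_def copy_owners_def mapc_nonneg[OF W])
  qed
  then show "wf_atom_map k (amap s') (cnt s')" "owner s' = owner s" "live s' = live s"
    "dom (amap s) \<subseteq> dom (amap s')" "num_atoms k s' = num_atoms k s + length d" "c \<le> 3 * mapc s"
    "owners_sound k (amap s) Ow L \<Longrightarrow> owners_sound k (amap s') (copy_owners d Ow) L"
    by blast+
qed

lemma create_atoms_facts:
  assumes W: "wf_atom_map k (amap s) (cnt s)" and r: "lo r < hi r" "hi r \<le> 2 ^ k"
    and ca: "create_atoms r s = (s1, D, c)"
  shows "wf_atom_map k (amap s1) (cnt s1)" "owner s1 = owner s" "live s1 = live s"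
    "dom (amap s) \<subseteq> dom (amap s1)" "num_atoms k s1 = num_atoms k s + length D"
    "c \<le> 12 * real (num_atoms k s1)"
    "owners_sound k (amap s) Ow L \<Longrightarrow> owners_sound k (amap s1) (copy_owners D Ow) L"
proof -
  obtain s' d1 c1 where e1: "insert_key s (lo r) = (s', d1, c1)" by (metis prod_cases3)
  obtain s'' d2 c2 where e2: "insert_key s' (hi r) = (s'', d2, c2)" by (metis prod_cases3)
  have e: "s1 = s''" "D = d1 @ d2" "c = c1 + c2" using ca e1 e2 by (simp_all add: create_atoms_def)
  have "lo r \<le> 2 ^ k" using r by simp
  note F1 = insert_key_facts[OF W this e1]
  note F2 = insert_key_facts[OF F1(1) r(2) e2]
  show "wf_atom_map k (amap s1) (cnt s1)" "owner s1 = owner s" "live s1 = live s"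
    "dom (amap s) \<subseteq> dom (amap s1)" "num_atoms k s1 = num_atoms k s + length D"
    using F1 F2 e by auto
  show "owners_sound k (amap s) Ow L \<Longrightarrow> owners_sound k (amap s1) (copy_owners D Ow) L"
    using e by (simp add: copy_owners_append F1(7) F2(7))
  have fin: "finite (dom (amap s''))" using F2(1) by (rule wf_atom_map_finite)
  have "dom (amap s) \<subseteq> dom (amap s'')" using F1(4) F2(4) by blast
  then have "mapc s \<le> 2 * real (num_atoms k s1)" "mapc s' \<le> 2 * real (num_atoms k s1)"
    using mapc_le_num_atoms[OF W] mapc_le_num_atoms[OF F1(1)] F2(4) e(1)
      num_atoms_mono[OF fin, of s k] num_atoms_mono[OF fin, of s' k] by auto
  then show "c \<le> 12 * real (num_atoms k s1)" using F1(6) F2(6) e(3) by linarith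
qed

definition invar :: "nat \<Rightarrow> 'v st \<Rightarrow> bool" where
  "invar k s \<longleftrightarrow> wf_atom_map k (amap s) (cnt s) \<and> finite (live s)
     \<and> owners_sound k (amap s) (owner s) (live s)"

lemma invar_init: "invar k (init k)"
  unfolding invar_def owners_sound_def wf_atom_map_def init_def by (auto simp: inj_on_def)

lemma card_covering_le_overlap:
  assumes fin: "finite (live t)" and L: "L \<subseteq> live t" and n: "n \<in> dom (amap t)" "n < 2 ^ k"
  shows "card {r \<in> L. source r = x \<and> covers (amap t) r n} \<le> overlap k t"
proof -
  let ?S = "{card {r \<in> live t. source r = x \<and> a \<in> atoms_of k t r} | x a. True}"
  have "{r \<in> L. source r = x \<and> covers (amap t) r n}
      \<subseteq> {r \<in> live t. source r = x \<and> the (amap t n) \<in> atoms_of k t r}"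
    using L n unfolding atoms_of_def atom_keys_covers by auto
  then have "card {r \<in> L. source r = x \<and> covers (amap t) r n}
      \<le> card {r \<in> live t. source r = x \<and> the (amap t n) \<in> atoms_of k t r}"
    using fin by (intro card_mono) auto
  moreover have "?S \<subseteq> {..card (live t)}" using fin by (auto intro: card_mono)
  then have "card {r \<in> live t. source r = x \<and> the (amap t n) \<in> atoms_of k t r} \<le> overlap k t"
    unfolding overlap_def by (intro Max_ge) (auto dest: finite_subset)
  ultimately show ?thesis by linarith
qed

lemma card_owner_le_overlap:
  assumes I: "owners_sound k m Ow L" and W: "wf_atom_map k m c" and t: "invar k t"
    and sub: "dom m \<subseteq> dom (amap t)" "L \<subseteq> live t" and p: "p \<in> dom m" "p < 2 ^ k"
  shows "card (Ow (the (m p)) x) \<le> overlap k t"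
proof -
  have fin: "finite (dom (amap t))" "finite (live t)"
    using t unfolding invar_def by (auto dest: wf_atom_map_finite)
  have "2 ^ k \<in> dom m" using W unfolding wf_atom_map_def by simp
  then have "Ow (the (m p)) x \<subseteq> {r \<in> L. source r = x \<and> covers (amap t) r p}"
    using I p covers_refine[OF fin(1) sub(1)] unfolding owners_sound_def by blast
  then have "card (Ow (the (m p)) x) \<le> card {r \<in> L. source r = x \<and> covers (amap t) r p}"
    using fin(2) sub(2) by (intro card_mono) (auto dest: finite_subset)
  also have "\<dots> \<le> overlap k t"
    using card_covering_le_overlap[OF fin(2) sub(2), of p k x] p sub(1) by auto
  finally show ?thesis .
qed

lemma log_Suc_le_lg: "log 2 (real M + 1) \<le> lg M"
proof (cases "M = 0")
  case False
  then have "log 2 (real M + 1) \<le> log 2 (2 * real M)" by (intro log_mono) auto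
  also have "\<dots> = lg M" using False by (simp add: log_mult)
  finally show ?thesis .
qed (simp add: log_def)

lemma lg_ge_1: "1 \<le> lg M"
  using log_nat_nonneg[of M] by simp

lemma bstc_le: "card B \<le> M \<Longrightarrow> bstc B \<le> 2 * lg M"
proof -
  assume "card B \<le> M"
  then have "log 2 (real (card B) + 1) \<le> log 2 (real M + 1)" by (intro log_mono) auto
  then show ?thesis unfolding bstc_def using log_Suc_le_lg[of M] lg_ge_1[of M] by argo
qed

lemma apply_delta_cost:
  fixes t :: "'v st" and L :: "'v rule set"
  assumes fin: "finite L" and cL: "card L \<le> N"
    and sub: "\<And>x. owner t a x \<subseteq> {r \<in> L. source r = x}" and cM: "\<And>x. card (owner t a x) \<le> M"
  shows "snd (apply_delta (a, a') t) \<le> 1 + 5 * real N * lg M"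
proof -
  let ?T = "owner t a"
  let ?E = "entries ?T"
  have E: "?E \<subseteq> source ` L" unfolding entries_def using sub by fastforce
  then have finE: "finite ?E" using fin by (auto dest: finite_subset)
  have "card ?E \<le> card (source ` L)" using E fin by (intro card_mono) auto
  then have cE: "card ?E \<le> N" using cL card_image_le[OF fin, of source] by linarith
  have finT: "finite (?T x)" for x using sub fin by (blast intro: finite_subset)
  have "(\<Sum>x\<in>?E. card (?T x)) = card (\<Union>x\<in>?E. ?T x)"
    using sub by (intro card_UN_disjoint[symmetric] finE finT ballI impI) blast+
  also have "\<dots> \<le> card L" using sub fin by (intro card_mono) auto
  finally have cards: "(\<Sum>x\<in>?E. real (card (?T x))) \<le> real N"
    using cL by (simp flip: of_nat_sum)
  have "2 + bstc (?T x) \<le> 4 * lg M" for x using bstc_le[OF cM, of x] lg_ge_1[of M] by argo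
  then have "(\<Sum>x\<in>?E. 2 + bstc (?T x)) \<le> real (card ?E) * (4 * lg M)"
    by (intro sum_bounded_above)
  also have "\<dots> \<le> real N * (4 * lg M)"
    using cE lg_ge_1[of M] by (intro mult_right_mono) auto
  finally have trees: "(\<Sum>x\<in>?E. 2 + bstc (?T x)) \<le> real N * (4 * lg M)" .
  have "snd (apply_delta (a, a') t) = 1 + (\<Sum>x\<in>?E. real (card (?T x))) + (\<Sum>x\<in>?E. 2 + bstc (?T x))"
    by (simp add: apply_delta_def Let_def sum.distrib[symmetric] algebra_simps)
  also have "\<dots> \<le> 1 + 5 * real N * lg M"
    using cards trees mult_nonneg_nonneg[OF of_nat_0_le_iff log_nat_nonneg, of N M]
    by (simp add: algebra_simps)
  finally show ?thesis .
qed

lemma insert_key_copy_cost: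
  assumes W: "wf_atom_map k (amap s) (cnt s)" and n: "n \<le> 2 ^ k"
    and ik: "insert_key s n = (s', d, c)"
    and I: "owners_sound k (amap s) (owner u) L" and fin: "finite L" and cL: "card L \<le> N"
    and bound: "\<And>p x. p \<in> dom (amap s) \<Longrightarrow> p < 2 ^ k \<Longrightarrow> card (owner u (the (amap s p)) x) \<le> M"
  shows "snd (run_steps apply_delta d u) \<le> real (length d) * (1 + 5 * real N * lg M)"
proof (cases "n \<in> dom (amap s)")
  case True
  then show ?thesis using ik by (simp add: insert_key_def)
next
  case False
  define p where "p = Max {q \<in> dom (amap s). q < n}"
  note P = pred_key_facts[OF W n False, folded p_def]
  have d: "d = [(the (amap s p), cnt s)]"
    using ik False by (auto simp: insert_key_def pred_key_def p_def Let_def)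
  have "p < 2 ^ k" using P by simp
  then have "owner u (the (amap s p)) x \<subseteq> {r \<in> L. source r = x}" for x
    using I P(1) unfolding owners_sound_def by blast
  then have "snd (apply_delta (the (amap s p), cnt s) u) \<le> 1 + 5 * real N * lg M"
    using bound[OF P(1) \<open>p < 2 ^ k\<close>] by (intro apply_delta_cost[OF fin cL])
  then show ?thesis using d by (simp add: run_steps_Cons_eq del: run_steps.simps(2))
qed

lemma create_atoms_copy_cost:
  assumes s: "invar k s" and r: "lo r < hi r" "hi r \<le> 2 ^ k"
    and ca: "create_atoms r s = (s1, D, c)" and cN: "card (live s) \<le> N"
    and t: "invar k t" "dom (amap s1) \<subseteq> dom (amap t)" "live s \<subseteq> live t" "overlap k t \<le> M"
  shows "snd (run_steps apply_delta D s1) \<le> real (length D) * (1 + 5 * real N * lg M)"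
proof -
  have W: "wf_atom_map k (amap s) (cnt s)" and finL: "finite (live s)"
    and I: "owners_sound k (amap s) (owner s) (live s)" using s unfolding invar_def by auto
  obtain s' d1 c1 where e1: "insert_key s (lo r) = (s', d1, c1)" by (metis prod_cases3)
  obtain s'' d2 c2 where e2: "insert_key s' (hi r) = (s'', d2, c2)" by (metis prod_cases3)
  have e: "s1 = s''" "D = d1 @ d2" using ca e1 e2 by (simp_all add: create_atoms_def)
  have "lo r \<le> 2 ^ k" using r by simp
  note F1 = insert_key_facts[OF W this e1]
  note F2 = insert_key_facts[OF F1(1) r(2) e2]
  have dom1: "dom (amap s') \<subseteq> dom (amap t)" and dom0: "dom (amap s) \<subseteq> dom (amap t)"
    using F1(4) F2(4) e(1) t(2) by auto
  let ?t1 = "fst (run_steps apply_delta d1 s1)"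
  have "snd (run_steps apply_delta d1 s1) \<le> real (length d1) * (1 + 5 * real N * lg M)"
    using I F1(2) F2(2) e(1) card_owner_le_overlap[OF I W t(1) dom0 t(3)] t(4)
    by (intro insert_key_copy_cost[OF W \<open>lo r \<le> 2 ^ k\<close> e1 _ finL cN]) (auto intro: order.trans)
  moreover have "snd (run_steps apply_delta d2 ?t1) \<le> real (length d2) * (1 + 5 * real N * lg M)"
  proof -
    have "owner ?t1 = copy_owners d1 (owner s)"
      using run_steps_apply_delta[of d1 s1] F1(2) F2(2) e(1) by simp
    moreover note I1 = F1(7)[OF I]
    ultimately show ?thesis
      using card_owner_le_overlap[OF I1 F1(1) t(1) dom1 t(3)] t(4)
      by (intro insert_key_copy_cost[OF F1(1) r(2) e2 _ finL cN]) (auto intro: order.trans)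
  qed
  ultimately show ?thesis using e(2) by (simp add: run_steps_append algebra_simps)
qed

lemma atom_list_facts:
  assumes W: "wf_atom_map k (amap t) c"
  shows "distinct (atom_list k t r)" "set (atom_list k t r) = (\<lambda>n. the (amap t n)) ` atom_keys k t r"
    "length (atom_list k t r) \<le> num_atoms k t"
proof -
  have sub: "atom_keys k t r \<subseteq> {n \<in> dom (amap t). n < 2 ^ k}" unfolding atom_keys_def by auto
  have fin: "finite {n \<in> dom (amap t). n < 2 ^ k}" using wf_atom_map_finite[OF W] by simp
  then have fa: "finite (atom_keys k t r)" using sub by (rule finite_subset[rotated])
  have "inj_on (\<lambda>n. the (amap t n)) (atom_keys k t r)"
    using W sub unfolding wf_atom_map_def by (auto intro: inj_on_subset)
  then show "distinct (atom_list k t r)" unfolding atom_list_def using fa by (simp add: distinct_map)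
  show "set (atom_list k t r) = (\<lambda>n. the (amap t n)) ` atom_keys k t r"
    unfolding atom_list_def using fa by simp
  have "card (atom_keys k t r) \<le> num_atoms k t" unfolding num_atoms_def by (rule card_mono[OF fin sub])
  then show "length (atom_list k t r) \<le> num_atoms k t" unfolding atom_list_def using fa by simp
qed

lemma atom_in_atom_list_iff:
  assumes W: "wf_atom_map k (amap t) c" and n: "n \<in> dom (amap t)" "n < 2 ^ k"
  shows "the (amap t n) \<in> set (atom_list k t r) \<longleftrightarrow> covers (amap t) r n"
proof -
  have "inj_on (\<lambda>n. the (amap t n)) (dom (amap t))" using W unfolding wf_atom_map_def by simp
  then show ?thesis
    unfolding atom_list_facts(2)[OF W] atom_keys_covers using n by (auto dest: inj_onD)
qed

lemma sum_atom_list_le: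
  assumes W: "wf_atom_map k (amap t) c" and b: "0 \<le> b"
    and bound: "\<And>n. n \<in> dom (amap t) \<Longrightarrow> n < 2 ^ k \<Longrightarrow> f (the (amap t n)) \<le> b"
  shows "(\<Sum>a\<in>set (atom_list k t r). f a) \<le> real (num_atoms k t) * b"
proof -
  have "(\<Sum>a\<in>set (atom_list k t r). f a) \<le> real (card (set (atom_list k t r))) * b"
    using bound atom_list_facts(2)[OF W] unfolding atom_keys_def by (intro sum_bounded_above) auto
  also have "\<dots> \<le> real (num_atoms k t) * b"
    using atom_list_facts(1,3)[OF W, of r] b by (intro mult_right_mono) (auto simp: distinct_card)
  finally show ?thesis .
qed

lemma run_ins_atoms:
  fixes t :: "'v st" and r :: "'v rule"
  assumes "wf_atom_map k (amap t) c"
  defines "as \<equiv> atom_list k t r"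
  shows "amap (fst (run_steps (ins_atom r) as t)) = amap t \<and> cnt (fst (run_steps (ins_atom r) as t)) = cnt t
    \<and> live (fst (run_steps (ins_atom r) as t)) = live t
    \<and> owner (fst (run_steps (ins_atom r) as t)) =
        (\<lambda>a y. if a \<in> set as \<and> y = source r then owner t a y \<union> {r} else owner t a y)
    \<and> snd (run_steps (ins_atom r) as t) = (\<Sum>a\<in>set as. 3 + 2 * bstc (owner t a (source r)))"
  unfolding as_def
  by (rule run_steps_owner_update[where F = "\<lambda>B. B \<union> {r}" and cost = "\<lambda>B. 3 + 2 * bstc B",
        OF _ atom_list_facts(1)[OF assms(1)]])
    (simp add: ins_atom_def Let_def)

lemma run_rem_atoms:
  fixes t :: "'v st" and r :: "'v rule"
  assumes "wf_atom_map k (amap t) c"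
  defines "as \<equiv> atom_list k t r"
  shows "amap (fst (run_steps (rem_atom r) as t)) = amap t \<and> cnt (fst (run_steps (rem_atom r) as t)) = cnt t
    \<and> live (fst (run_steps (rem_atom r) as t)) = live t
    \<and> owner (fst (run_steps (rem_atom r) as t)) =
        (\<lambda>a y. if a \<in> set as \<and> y = source r then owner t a y - {r} else owner t a y)
    \<and> snd (run_steps (rem_atom r) as t) =
        (\<Sum>a\<in>set as. 3 + 2 * bstc (owner t a (source r)) + bstc (owner t a (source r) - {r}))"
  unfolding as_def
  by (rule run_steps_owner_update[where F = "\<lambda>B. B - {r}"
        and cost = "\<lambda>B. 3 + 2 * bstc B + bstc (B - {r})", OF _ atom_list_facts(1)[OF assms(1)]])
    (simp add: rem_atom_def Let_def)

lemma owners_sound_add_rule: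
  assumes W: "wf_atom_map k (amap t) c" and I: "owners_sound k (amap t) Ow L"
  shows "owners_sound k (amap t)
    (\<lambda>a y. if a \<in> set (atom_list k t r) \<and> y = source r then Ow a y \<union> {r} else Ow a y) (insert r L)"
  unfolding owners_sound_def
proof (intro ballI impI allI)
  fix n y assume n: "n \<in> dom (amap t)" "n < 2 ^ k"
  then have "Ow (the (amap t n)) y \<subseteq> {r' \<in> L. source r' = y \<and> covers (amap t) r' n}"
    using I unfolding owners_sound_def by blast
  then show "(if the (amap t n) \<in> set (atom_list k t r) \<and> y = source r
      then Ow (the (amap t n)) y \<union> {r} else Ow (the (amap t n)) y)
      \<subseteq> {r' \<in> insert r L. source r' = y \<and> covers (amap t) r' n}"
    using atom_in_atom_list_iff[OF W n, of r] by auto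
qed

lemma owners_sound_del_rule:
  assumes W: "wf_atom_map k (amap t) c" and I: "owners_sound k (amap t) Ow L"
  shows "owners_sound k (amap t)
    (\<lambda>a y. if a \<in> set (atom_list k t r) \<and> y = source r then Ow a y - {r} else Ow a y) (L - {r})"
  unfolding owners_sound_def
proof (intro ballI impI allI)
  fix n y assume n: "n \<in> dom (amap t)" "n < 2 ^ k"
  then have "Ow (the (amap t n)) y \<subseteq> {r' \<in> L. source r' = y \<and> covers (amap t) r' n}"
    using I unfolding owners_sound_def by blast
  then show "(if the (amap t n) \<in> set (atom_list k t r) \<and> y = source r
      then Ow (the (amap t n)) y - {r} else Ow (the (amap t n)) y)
      \<subseteq> {r' \<in> L - {r}. source r' = y \<and> covers (amap t) r' n}"
    using atom_in_atom_list_iff[OF W n, of r] by auto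
qed

lemma enumc_le: "wf_atom_map k (amap t) c \<Longrightarrow> enumc k t r \<le> 3 * real (num_atoms k t)"
  using mapc_le_num_atoms[of k t c] atom_list_facts(3)[of k t c r] unfolding enumc_def by simp

lemma run_ins_atoms_cost:
  assumes W: "wf_atom_map k (amap t) c" and I: "owners_sound k (amap t) (owner t) L"
    and t': "invar k t'" "amap t' = amap t" "L \<subseteq> live t'" "overlap k t' \<le> M"
  shows "snd (run_steps (ins_atom r) (atom_list k t r) t) \<le> 7 * (real (num_atoms k t) * lg M)"
proof -
  have "snd (run_steps (ins_atom r) (atom_list k t r) t) \<le> real (num_atoms k t) * (7 * lg M)"
    unfolding run_ins_atoms[OF W, of r, THEN conjunct2, THEN conjunct2, THEN conjunct2,
        THEN conjunct2]
  proof (rule sum_atom_list_le[OF W])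
    fix n assume n: "n \<in> dom (amap t)" "n < 2 ^ k"
    let ?B = "owner t (the (amap t n)) (source r)"
    have "card ?B \<le> M"
      using card_owner_le_overlap[OF I W t'(1) _ t'(3) n, of "source r"] t'(2,4) by simp
    then show "3 + 2 * bstc ?B \<le> 7 * lg M" using bstc_le lg_ge_1[of M] by fastforce
  qed (use lg_ge_1[of M] in simp)
  then show ?thesis by (simp add: algebra_simps)
qed

lemma run_rem_atoms_cost:
  assumes s: "invar k s" and M: "overlap k s \<le> M"
  shows "snd (run_steps (rem_atom r) (atom_list k s r) s) \<le> 9 * (real (num_atoms k s) * lg M)"
proof -
  have W: "wf_atom_map k (amap s) (cnt s)" and I: "owners_sound k (amap s) (owner s) (live s)"
    using s unfolding invar_def by auto
  have "snd (run_steps (rem_atom r) (atom_list k s r) s) \<le> real (num_atoms k s) * (9 * lg M)"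
    unfolding run_rem_atoms[OF W, of r, THEN conjunct2, THEN conjunct2, THEN conjunct2,
        THEN conjunct2]
  proof (rule sum_atom_list_le[OF W])
    fix n assume n: "n \<in> dom (amap s)" "n < 2 ^ k"
    let ?B = "owner s (the (amap s n)) (source r)"
    have "card ?B \<le> M"
      using card_owner_le_overlap[OF I W s subset_refl subset_refl n, of "source r"] M by linarith
    moreover have "card (?B - {r}) \<le> M" using calculation card_Diff1_le[of ?B r] by linarith
    ultimately have "bstc ?B \<le> 2 * lg M" "bstc (?B - {r}) \<le> 2 * lg M" using bstc_le by blast+
    then show "3 + 2 * bstc ?B + bstc (?B - {r}) \<le> 9 * lg M" using lg_ge_1[of M] by argo
  qed (use lg_ge_1[of M] in simp)
  then show ?thesis by (simp add: algebra_simps)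
qed

lemma insert_rule_split_phase:
  assumes s: "invar k s" and r: "lo r < hi r" "hi r \<le> 2 ^ k"
  obtains s1 D c s2 La s3 where "create_atoms r s = (s1, D, c)"
    "s2 = fst (run_steps apply_delta D s1)" "La = atom_list k s2 r"
    "s3 = fst (run_steps (ins_atom r) La s2)"
    "insert_rule k r s = (s3\<lparr>live := insert r (live s)\<rparr>,
       c + snd (run_steps apply_delta D s1) + enumc k s2 r + snd (run_steps (ins_atom r) La s2))"
    "wf_atom_map k (amap s2) (cnt s2)" "owners_sound k (amap s2) (owner s2) (live s)"
    "amap s2 = amap s1" "dom (amap s) \<subseteq> dom (amap s2)"
    "num_atoms k s2 = num_atoms k s + length D" "c \<le> 12 * real (num_atoms k s2)"
proof -
  have W: "wf_atom_map k (amap s) (cnt s)" and I: "owners_sound k (amap s) (owner s) (live s)"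
    using s unfolding invar_def by auto
  obtain s1 D c where ca: "create_atoms r s = (s1, D, c)" by (metis prod_cases3)
  define s2 where "s2 = fst (run_steps apply_delta D s1)"
  define La where "La = atom_list k s2 r"
  define s3 where "s3 = fst (run_steps (ins_atom r) La s2)"
  note F = create_atoms_facts[OF W r ca]
  have R: "amap s2 = amap s1" "cnt s2 = cnt s1" "live s2 = live s"
    "owner s2 = copy_owners D (owner s)"
    using run_steps_apply_delta[of D s1] F(2,3) unfolding s2_def by auto
  have W2: "wf_atom_map k (amap s2) (cnt s2)" using F(1) R by simp
  have K: "num_atoms k s2 = num_atoms k s1" using R(1) by (simp add: num_atoms_def)
  have "live s3 = live s" using run_ins_atoms[OF W2, of r] R(3) unfolding s3_def La_def by simp
  then have "insert_rule k r s = (s3\<lparr>live := insert r (live s)\<rparr>,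
       c + snd (run_steps apply_delta D s1) + enumc k s2 r + snd (run_steps (ins_atom r) La s2))"
    unfolding insert_rule_def ca
    by (simp add: case_prod_beta s2_def[symmetric] La_def[symmetric] s3_def[symmetric])
  then show thesis
    using that[OF ca s2_def La_def s3_def] W2 F(4-6) F(7)[OF I] R K by simp
qed

lemma insert_rule_invar:
  assumes s: "invar k s" and r: "lo r < hi r" "hi r \<le> 2 ^ k"
  shows "invar k (fst (insert_rule k r s))" "live (fst (insert_rule k r s)) = insert r (live s)"
    "dom (amap s) \<subseteq> dom (amap (fst (insert_rule k r s)))"
proof -
  obtain s1 D c s2 La s3 where "create_atoms r s = (s1, D, c)"
    "s2 = fst (run_steps apply_delta D s1)" and La: "La = atom_list k s2 r"
    and s3: "s3 = fst (run_steps (ins_atom r) La s2)"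
    and split: "insert_rule k r s = (s3\<lparr>live := insert r (live s)\<rparr>,
       c + snd (run_steps apply_delta D s1) + enumc k s2 r + snd (run_steps (ins_atom r) La s2))"
    and W2: "wf_atom_map k (amap s2) (cnt s2)" and I2: "owners_sound k (amap s2) (owner s2) (live s)"
    and "amap s2 = amap s1" and dom: "dom (amap s) \<subseteq> dom (amap s2)"
    and "num_atoms k s2 = num_atoms k s + length D" "c \<le> 12 * real (num_atoms k s2)"
    by (rule insert_rule_split_phase[OF assms])
  note R = run_ins_atoms[OF W2, of r]
  have "finite (live s)" using s unfolding invar_def by simp
  then show "invar k (fst (insert_rule k r s))"
    unfolding invar_def split using R W2 owners_sound_add_rule[OF W2 I2, of r] by (simp add: La s3)
  show "live (fst (insert_rule k r s)) = insert r (live s)" using split by simp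
  show "dom (amap s) \<subseteq> dom (amap (fst (insert_rule k r s)))" using split R dom by (simp add: La s3)
qed

lemma insert_rule_cost:
  assumes s: "invar k s" and r: "lo r < hi r" "hi r \<le> 2 ^ k"
    and cN: "card (live s) \<le> N" and M: "overlap k (fst (insert_rule k r s)) \<le> M"
  shows "snd (insert_rule k r s) \<le> 22 * real (num_atoms k (fst (insert_rule k r s))) * lg M
    + (real (num_atoms k (fst (insert_rule k r s))) - real (num_atoms k s)) * (1 + 5 * real N * lg M)"
proof -
  obtain s1 D c s2 La s3 where ca: "create_atoms r s = (s1, D, c)"
    and "s2 = fst (run_steps apply_delta D s1)" and La: "La = atom_list k s2 r"
    and s3: "s3 = fst (run_steps (ins_atom r) La s2)"
    and split: "insert_rule k r s = (s3\<lparr>live := insert r (live s)\<rparr>,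
       c + snd (run_steps apply_delta D s1) + enumc k s2 r + snd (run_steps (ins_atom r) La s2))"
    and W2: "wf_atom_map k (amap s2) (cnt s2)" and I2: "owners_sound k (amap s2) (owner s2) (live s)"
    and m: "amap s2 = amap s1" and "dom (amap s) \<subseteq> dom (amap s2)"
    and K2: "num_atoms k s2 = num_atoms k s + length D" and c: "c \<le> 12 * real (num_atoms k s2)"
    by (rule insert_rule_split_phase[OF s r])
  define sf where "sf = fst (insert_rule k r s)"
  define K where "K = num_atoms k sf"
  define B where "B = 1 + 5 * real N * lg M"
  have sf: "amap sf = amap s2" "live s \<subseteq> live sf" "invar k sf"
    using split run_ins_atoms[OF W2, of r] insert_rule_invar[OF s r]
    unfolding sf_def by (auto simp: s3 La)
  have K: "num_atoms k s2 = K" unfolding K_def using sf(1) by (simp add: num_atoms_def)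
  have "snd (run_steps apply_delta D s1) \<le> real (length D) * B"
    using sf m M unfolding sf_def B_def by (intro create_atoms_copy_cost[OF s r ca cN]) auto
  also have "real (length D) = real K - real (num_atoms k s)" using K K2 by simp
  finally have copy: "snd (run_steps apply_delta D s1) \<le> (real K - real (num_atoms k s)) * B" .
  have ins: "snd (run_steps (ins_atom r) La s2) \<le> 7 * (real K * lg M)"
    using run_ins_atoms_cost[OF W2 I2 sf(3,1,2)] M K unfolding La sf_def by simp
  have "real K \<le> real K * lg M" using mult_left_mono[OF lg_ge_1, of "real K"] by simp
  then have "snd (insert_rule k r s) \<le> 22 * (real K * lg M) + (real K - real (num_atoms k s)) * B"
    using split c K copy ins enumc_le[OF W2, of r] by simp
  then show ?thesis unfolding B_def K_def sf_def by (simp add: mult.assoc)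
qed

lemma remove_rule_invar:
  assumes s: "invar k s"
  shows "invar k (fst (remove_rule k r s))" "live (fst (remove_rule k r s)) = live s - {r}"
    "amap (fst (remove_rule k r s)) = amap s"
proof -
  have W: "wf_atom_map k (amap s) (cnt s)" and I: "owners_sound k (amap s) (owner s) (live s)"
    and "finite (live s)" using s unfolding invar_def by auto
  then show "invar k (fst (remove_rule k r s))" "live (fst (remove_rule k r s)) = live s - {r}"
    "amap (fst (remove_rule k r s)) = amap s"
    using run_rem_atoms[OF W, of r] owners_sound_del_rule[OF W I, of r]
    by (simp_all add: remove_rule_def case_prod_beta invar_def)
qed

lemma remove_rule_cost:
  assumes s: "invar k s" and M: "overlap k s \<le> M"
  shows "snd (remove_rule k r s) \<le> 22 * real (num_atoms k s) * lg M"
proof -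
  have W: "wf_atom_map k (amap s) (cnt s)" using s unfolding invar_def by simp
  have "real (num_atoms k s) \<le> real (num_atoms k s) * lg M"
    using mult_left_mono[OF lg_ge_1, of "real (num_atoms k s)"] by simp
  then show ?thesis using enumc_le[OF W, of r] run_rem_atoms_cost[OF s M, of r]
    by (simp add: remove_rule_def case_prod_beta)
qed

lemma exec_op_invar:
  assumes s: "invar k s" and v: "valid_op k E s p"
  shows "invar k (fst (exec_op k p s))" "dom (amap s) \<subseteq> dom (amap (fst (exec_op k p s)))"
    "card (live (fst (exec_op k p s))) \<le> card (live s) + 1"
proof -
  have fin: "finite (live s)" using s unfolding invar_def by simp
  have "invar k (fst (exec_op k p s)) \<and> dom (amap s) \<subseteq> dom (amap (fst (exec_op k p s)))
    \<and> card (live (fst (exec_op k p s))) \<le> card (live s) + 1"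
  proof (cases p)
    case (Ins r)
    then have "lo r < hi r" "hi r \<le> 2 ^ k" using v unfolding valid_op_def by auto
    then show ?thesis
      using Ins insert_rule_invar[OF s] fin by (simp add: exec_op_def card_insert_if)
  next
    case (Rem r)
    then show ?thesis
      using remove_rule_invar[OF s] card_Diff1_le[of "live s" r] by (simp add: exec_op_def)
  qed
  then show "invar k (fst (exec_op k p s))" "dom (amap s) \<subseteq> dom (amap (fst (exec_op k p s)))"
    "card (live (fst (exec_op k p s))) \<le> card (live s) + 1" by blast+
qed

lemma exec_op_cost:
  assumes s: "invar k s" and v: "valid_op k E s p" and N: "card (live s) \<le> N"
    and M: "overlap k s \<le> M" "overlap k (fst (exec_op k p s)) \<le> M"
  shows "snd (exec_op k p s) \<le> 22 * real (num_atoms k (fst (exec_op k p s))) * lg M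
    + (real (num_atoms k (fst (exec_op k p s))) - real (num_atoms k s)) * (1 + 5 * real N * lg M)"
proof (cases p)
  case (Ins r)
  then have "lo r < hi r" "hi r \<le> 2 ^ k" using v unfolding valid_op_def by auto
  then show ?thesis using Ins insert_rule_cost[OF s _ _ N] M(2) by (simp add: exec_op_def)
next
  case (Rem r)
  have "num_atoms k (fst (remove_rule k r s)) = num_atoms k s"
    using remove_rule_invar(3)[OF s] by (simp add: num_atoms_def)
  then show ?thesis using Rem remove_rule_cost[OF s M(1)] by (simp add: exec_op_def)
qed

lemma num_atoms_le_final:
  "invar k s \<Longrightarrow> valid_seq k E os s \<Longrightarrow> num_atoms k s \<le> num_atoms k (fst (run_steps (exec_op k) os s))"
proof (induction os arbitrary: s)
  case Nil
  then show ?case by simp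
next
  case (Cons p os)
  let ?s' = "fst (exec_op k p s)"
  have v: "valid_op k E s p" "valid_seq k E os ?s'" using Cons.prems(2) by simp_all
  note I' = exec_op_invar[OF Cons.prems(1) v(1)]
  have "finite (dom (amap ?s'))" using I'(1) unfolding invar_def by (auto dest: wf_atom_map_finite)
  then have "num_atoms k s \<le> num_atoms k ?s'" using I'(2) by (rule num_atoms_mono)
  with Cons.IH[OF I'(1) v(2)] show ?case by (simp add: run_steps_Cons_eq del: run_steps.simps(2))
qed

lemma states_hd: "s \<in> set (states k os s)"
  by (cases os) auto

lemma run_ops_cost:
  assumes s: "invar k s" "valid_seq k E os s" and N: "card (live s) + length os \<le> N"
    and M: "\<forall>t\<in>set (states k os s). overlap k t \<le> M"
  defines "sf \<equiv> fst (run_steps (exec_op k) os s)"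
  shows "snd (run_steps (exec_op k) os s) \<le> real (length os) * (22 * real (num_atoms k sf) * lg M)
    + (real (num_atoms k sf) - real (num_atoms k s)) * (1 + 5 * real N * lg M)"
proof -
  define B where "B = 1 + 5 * real N * lg M"
  define I where "I os' t \<longleftrightarrow> invar k t \<and> valid_seq k E os' t \<and> card (live t) + length os' \<le> N
    \<and> (\<forall>u\<in>set (states k os' t). overlap k u \<le> M) \<and> fst (run_steps (exec_op k) os' t) = sf"
    for os' t
  have "snd (run_steps (exec_op k) os s) \<le> real (length os) * (22 * real (num_atoms k sf) * lg M)
    + real (num_atoms k (fst (run_steps (exec_op k) os s))) * B - real (num_atoms k s) * B"
  proof (rule run_steps_amortized[where I = I])
    fix p os' t assume It: "I (p # os') t"
    let ?t' = "fst (exec_op k p t)"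
    have t: "invar k t" "valid_op k E t p" "valid_seq k E os' ?t'" "card (live t) + Suc (length os') \<le> N"
      "\<forall>u\<in>set (states k os' ?t'). overlap k u \<le> M" "overlap k t \<le> M"
      "fst (run_steps (exec_op k) os' ?t') = sf"
      using It unfolding I_def by (simp_all add: run_steps_Cons_eq del: run_steps.simps(2))
    note t' = exec_op_invar[OF t(1,2)]
    show "I os' ?t' \<and> snd (exec_op k p t) \<le> 22 * real (num_atoms k sf) * lg M
      + real (num_atoms k ?t') * B - real (num_atoms k t) * B"
    proof
      show "I os' ?t'" unfolding I_def using t t'(1,3) by simp
      have "num_atoms k ?t' \<le> num_atoms k sf" using num_atoms_le_final[OF t'(1) t(3)] t(7) by simp
      then have "22 * real (num_atoms k ?t') * lg M \<le> 22 * real (num_atoms k sf) * lg M"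
        using lg_ge_1[of M] by (intro mult_right_mono) auto
      moreover have "overlap k ?t' \<le> M" using t(5) states_hd by blast
      ultimately show "snd (exec_op k p t) \<le> 22 * real (num_atoms k sf) * lg M
        + real (num_atoms k ?t') * B - real (num_atoms k t) * B"
        using exec_op_cost[OF t(1,2) _ t(6), of N] t(4) unfolding B_def left_diff_distrib by simp
    qed
  next
    show "I os s" unfolding I_def sf_def using s N M by simp
  qed
  then show ?thesis unfolding sf_def B_def by (simp add: algebra_simps)
qed

lemma total_cost_le:
  fixes os :: "'v oper list"
  assumes v: "valid_seq k E os (init k)"
  shows "total_cost k os \<le> 27 * (real (length os) * real (num_atoms k (final_state k os))
    * lg (max_overlap k os)) + real (num_atoms k (final_state k os))"
proof -
  define R where "R = length os"
  define K where "K = num_atoms k (final_state k os)"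
  define M where "M = max_overlap k os"
  have "\<forall>t\<in>set (states k os (init k)). overlap k t \<le> M" unfolding M_def max_overlap_def by simp
  then have "total_cost k os \<le> real R * (22 * real K * lg M)
      + (real K - real (num_atoms k (init k :: 'v st))) * (1 + 5 * real R * lg M)"
    using run_ops_cost[OF invar_init v, of R M]
    unfolding total_cost_def final_state_def R_def K_def by (simp add: init_def)
  also have "\<dots> \<le> real R * (22 * real K * lg M) + real K * (1 + 5 * real R * lg M)"
    using lg_ge_1[of M] by (intro add_left_mono mult_right_mono) simp_all
  also have "\<dots> = 27 * (real R * real K * lg M) + real K" by (simp add: algebra_simps)
  finally show ?thesis unfolding R_def K_def M_def .
qed

theorem theorem1:
  "\<exists>C :: real. C > 0 \<and>
     (\<forall>(k :: nat) (E :: ('v \<times> 'v) set) (os :: 'v oper list).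
        valid_seq k E os (init k) \<longrightarrow>
        total_cost k os \<le> C * real (length os) * real (num_atoms k (final_state k os))
                            * (1 + log 2 (real (max_overlap k os))))"
proof (intro exI[of _ 28] conjI allI impI)
  fix k :: nat and E :: "('v \<times> 'v) set" and os :: "'v oper list"
  assume v: "valid_seq k E os (init k)"
  define K where "K = real (num_atoms k (final_state k os))"
  define X where "X = real (length os) * K * lg (max_overlap k os)"
  show "total_cost k os \<le> 28 * real (length os) * real (num_atoms k (final_state k os))
      * (1 + log 2 (real (max_overlap k os)))"
  proof (cases "os = []")
    case True
    then show ?thesis by (simp add: total_cost_def)
  next
    case False
    then have "1 \<le> real (length os) * lg (max_overlap k os)"
      using lg_ge_1 mult_mono[of 1 "real (length os)" 1 "lg (max_overlap k os)"]
      by (simp add: Suc_le_eq)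
    then have "K * 1 \<le> K * (real (length os) * lg (max_overlap k os))"
      unfolding K_def by (intro mult_left_mono) simp_all
    then have "K \<le> X" unfolding X_def by (simp add: ac_simps)
    with total_cost_le[OF v] show ?thesis unfolding K_def[symmetric] X_def[symmetric]
      by (simp add: X_def mult.assoc)
  qed
qed simp

end
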